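(* Let $k$ be a positive integer and let $m>0$. Let $G$ be a bipartite graph with parts $A$ and $B$ that does not contain $K_{k,k}$ as a subgraph, and assume that $d_G(u)\leq m$ for all $u\in A$. Then $G$ has a spanning subgraph $G'$ such that $e(G')\geq e(G)/(k+1)$ and $d_{G'}(u,u')\leq k\,m^{1-1/k}$ for any two distinct $u,u'\in A$.
   Context: $d_G(u)$ is the degree of $u$ in $G$; $d_G(u,u')$ is the number of common neighbours of $u$ and $u'$ in $G$ (the codegree). *)

theory Defs
  imports Complex_Main
begin

(* A bipartite graph with parts A and B is represented by its edge set
   E \<subseteq> A \<times> B: the pair (a,b) stands for the edge {a,b}. *)
definition bipartite_graph :: "'a set \<Rightarrow> 'a set \<Rightarrow> ('a \<times> 'a) set \<Rightarrow> bool" where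
  "bipartite_graph A B E \<longleftrightarrow> finite A \<and> finite B \<and> A \<inter> B = {} \<and> E \<subseteq> A \<times> B"

definition degA :: "('a \<times> 'a) set \<Rightarrow> 'a \<Rightarrow> nat" where
  "degA E u = card {b. (u, b) \<in> E}"

definition codegA :: "('a \<times> 'a) set \<Rightarrow> 'a \<Rightarrow> 'a \<Rightarrow> nat" where
  "codegA E u u' = card {b. (u, b) \<in> E \<and> (u', b) \<in> E}"

(* G contains K_{k,k} as a subgraph (for bipartite G the two sides of a
   K_{k,k} copy lie in A and B respectively, up to swapping which is symmetric) *)
definition contains_Kkk :: "'a set \<Rightarrow> 'a set \<Rightarrow> ('a \<times> 'a) set \<Rightarrow> nat \<Rightarrow> bool" where
  "contains_Kkk A B E k \<longleftrightarrow>
     (\<exists>S T. S \<subseteq> A \<and> T \<subseteq> B \<and> card S = k \<and> card T = k \<and> S \<times> T \<subseteq> E)"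

end

theory Submission
  imports Defs
begin

text \<open>
  Call distinct \<open>u, u' \<in> A\<close> heavy if their codegree exceeds \<open>T = k m powr (1 - 1/k)\<close>,
  and let two edges \<open>(u, b)\<close>, \<open>(u', b)\<close> conflict if \<open>u, u'\<close> are heavy. A set of pairwise
  non-conflicting edges has all codegrees at most \<open>T\<close>, and by Caro--Wei the conflict graph
  has such an independent set of size at least the sum of \<open>1/(r e + 1)\<close> over the edges \<open>e\<close>,
  where \<open>r e\<close> counts the conflicts of \<open>e\<close>. By convexity of \<open>1/t\<close> this is at least
  \<open>e(G)/(k + 1)\<close> once conflicts average at most \<open>k\<close> per edge, i.e. once for every \<open>u \<in> A\<close>
  with heavy partners \<open>P\<close> the sum of \<open>|P \<inter> N(b)|\<close> over the neighbours \<open>b\<close> of \<open>u\<close> is at most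
  \<open>k d(u)\<close>. This is a Kovari--Sos--Turan count: \<open>k - 1\<close> vertices of \<open>P\<close> together with \<open>u\<close>
  have fewer than \<open>k\<close> common neighbours, so the sum of \<open>|P \<inter> N(b)| choose (k - 1)\<close> is at most
  \<open>(k - 1) (|P| choose (k - 1))\<close>, whereas the sum of \<open>|P \<inter> N(b)|\<close> is the sum of the
  codegrees \<open>d(u, u') > T\<close> over \<open>u' \<in> P\<close>. By Jensen's inequality and \<open>d(u) \<le> m\<close> these two
  bounds are incompatible with a sum exceeding \<open>k d(u)\<close>.
\<close>

lemma caro_wei:
  fixes adj :: "'b \<Rightarrow> 'b \<Rightarrow> bool"
  assumes sym: "\<And>x y. adj x y \<Longrightarrow> adj y x" and irrefl: "\<And>x. \<not> adj x x" and "finite V"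
  shows "\<exists>I\<subseteq>V. (\<forall>x\<in>I. \<forall>y\<in>I. \<not> adj x y) \<and>
           (\<Sum>x\<in>V. 1 / (real (card {y\<in>V. adj x y}) + 1)) \<le> real (card I)"
  using \<open>finite V\<close>
proof (induction "card V" arbitrary: V rule: less_induct)
  case less
  define dg where "dg W x = card {y\<in>W. adj x y}" for W x
  show ?case
  proof (cases "V = {}")
    case False
    then obtain v where v: "v \<in> V" and v_min: "\<And>w. w \<in> V \<Longrightarrow> dg V v \<le> dg V w"
      using ex_has_least_nat[of "\<lambda>x. x \<in> V" _ "dg V"] by blast
    define N where "N = insert v {y\<in>V. adj v y}"
    have "finite N" "N \<subseteq> V" "card N = dg V v + 1"
      using less.prems v irrefl by (auto simp: N_def dg_def)
    have "card (V - N) < card V"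
      using less.prems v by (intro psubset_card_mono) (auto simp: N_def)
    then obtain I where I: "I \<subseteq> V - N" "\<forall>x\<in>I. \<forall>y\<in>I. \<not> adj x y"
      "(\<Sum>x\<in>V - N. 1 / (real (dg (V - N) x) + 1)) \<le> real (card I)"
      using less.hyps[of "V - N"] less.prems unfolding dg_def by auto
    have "(\<Sum>x\<in>V. 1 / (real (dg V x) + 1))
          = (\<Sum>x\<in>V - N. 1 / (real (dg V x) + 1)) + (\<Sum>x\<in>N. 1 / (real (dg V x) + 1))"
      using less.prems \<open>N \<subseteq> V\<close> by (simp add: sum.subset_diff)
    also have "\<dots> \<le> (\<Sum>x\<in>V - N. 1 / (real (dg (V - N) x) + 1)) + (\<Sum>x\<in>N. 1 / (real (dg V v) + 1))"
    proof (intro add_mono sum_mono)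
      show "1 / (real (dg V x) + 1) \<le> 1 / (real (dg (V - N) x) + 1)" for x
        using less.prems by (auto simp: dg_def intro!: frac_le card_mono)
      show "1 / (real (dg V x) + 1) \<le> 1 / (real (dg V v) + 1)" if "x \<in> N" for x
        using v_min[of x] that \<open>N \<subseteq> V\<close> by (auto intro!: frac_le)
    qed
    also have "\<dots> \<le> real (card I) + 1"
      using I(3) \<open>card N = dg V v + 1\<close> by (simp add: add.commute)
    also have "\<dots> = real (card (insert v I))"
    proof -
      have "finite I" "v \<notin> I"
        using I(1) less.prems finite_subset[of I V] by (auto simp: N_def)
      then show ?thesis by simp
    qed
    finally show ?thesis
      using I v sym irrefl by (intro exI[of _ "insert v I"]) (auto simp: dg_def N_def)
  qed simp
qed

lemma power_ge_tangent_line: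
  fixes z a :: real
  assumes "0 \<le> z" "0 < a"
  shows "a ^ n + real n * a ^ (n - 1) * (z - a) \<le> z ^ n"
proof (cases n)
  case (Suc n')
  have "1 + real n * (z / a - 1) \<le> (1 + (z / a - 1)) ^ n"
    by (rule Bernoulli_inequality) (use assms in simp)
  then have "a ^ n * (1 + real n * (z / a - 1)) \<le> a ^ n * (z / a) ^ n"
    by (intro mult_left_mono) (use assms in auto)
  also have "\<dots> = z ^ n" using assms by (simp add: power_divide)
  also have "a ^ n * (1 + real n * (z / a - 1)) = a ^ n + real n * a ^ (n - 1) * (z - a)"
    using assms Suc by (simp add: field_simps)
  finally show ?thesis .
qed simp

lemma card_mult_power_mean_le:
  fixes z :: "'b \<Rightarrow> real"
  assumes "finite D" "\<And>b. b \<in> D \<Longrightarrow> 0 \<le> z b" "0 < sum z D"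
  shows "real (card D) * (sum z D / real (card D)) ^ n \<le> (\<Sum>b\<in>D. z b ^ n)"
proof -
  define a where "a = sum z D / real (card D)"
  have "card D > 0" using assms by (metis card_gt_0_iff less_irrefl sum.empty)
  then have "0 < a" using assms by (simp add: a_def)
  have "real (card D) * a ^ n
        = (\<Sum>b\<in>D. a ^ n + real n * a ^ (n - 1) * (z b - a))"
    using \<open>card D > 0\<close>
    by (simp add: sum.distrib sum_subtractf flip: sum_distrib_left) (simp add: a_def)
  also have "\<dots> \<le> (\<Sum>b\<in>D. z b ^ n)"
    using assms \<open>0 < a\<close> by (intro sum_mono power_ge_tangent_line) auto
  finally show ?thesis by (simp add: a_def)
qed

lemma card_div_le_sum_inverse:
  fixes f :: "'b \<Rightarrow> real"
  assumes "finite S" "\<And>x. x \<in> S \<Longrightarrow> 0 \<le> f x" "0 \<le> c" "sum f S \<le> c * real (card S)"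
  shows "real (card S) / (c + 1) \<le> (\<Sum>x\<in>S. 1 / (f x + 1))"
proof -
  define a where "a = c + 1"
  \<comment> \<open>tangent line of \<open>1/t\<close> at \<open>t = a\<close>\<close>
  have tangent: "(2 * a - t) / a ^ 2 \<le> 1 / t" if "0 < t" for t
  proof -
    have "(2 * a - t) * t \<le> a ^ 2"
      using zero_le_power2[of "a - t"] by (simp add: power2_eq_square algebra_simps)
    then show ?thesis using that assms(3) by (simp add: a_def divide_le_eq le_divide_eq)
  qed
  have "0 < a" using assms(3) by (simp add: a_def)
  then have "real (card S) / a = (2 * a * real (card S) - a * real (card S)) / a ^ 2"
    by (simp add: power2_eq_square)
  also have "\<dots> \<le> (2 * a * real (card S) - (sum f S + real (card S))) / a ^ 2"
    using assms(4) by (intro divide_right_mono) (auto simp: a_def algebra_simps)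
  also have "\<dots> = (\<Sum>x\<in>S. (2 * a - (f x + 1)) / a ^ 2)"
    by (simp add: sum_subtractf sum.distrib flip: sum_divide_distrib)
  also have "\<dots> \<le> (\<Sum>x\<in>S. 1 / (f x + 1))"
    using assms(2) by (intro sum_mono tangent) (simp add: add_nonneg_pos)
  finally show ?thesis by (simp add: a_def)
qed

lemma power_le_fact_mult_choose:
  "(max 0 (real r - real n + 1)) ^ n \<le> fact n * real (r choose n)"
proof (induction n arbitrary: r)
  case (Suc n)
  show ?case
  proof (cases r)
    case (Suc r')
    have "real (Suc n) * real (Suc r' choose Suc n) = real (Suc r') * real (r' choose n)"
      by (metis Suc_times_binomial of_nat_mult)
    then have choose_eq: "fact (Suc n) * real (Suc r' choose Suc n) = real (Suc r') * (fact n * real (r' choose n))"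
      by (metis fact_Suc mult.assoc mult.left_commute of_nat_fact)
    have base_eq: "real (Suc r') - real (Suc n) + 1 = real r' - real n + 1" by simp
    have "(max 0 (real r' - real n + 1)) ^ Suc n \<le> real (Suc r') * (fact n * real (r' choose n))"
      using Suc.IH[of r'] by (simp del: of_nat_Suc) (intro mult_mono; simp)
    then show ?thesis unfolding Suc choose_eq base_eq .
  qed simp
qed simp

lemma fact_mult_choose_le_power: "fact n * real (p choose n) \<le> real p ^ n"
  using binomial_fact_pow[of p n] by (metis mult.commute of_nat_fact of_nat_le_iff of_nat_mult of_nat_power)

lemma exponent_lt_mean_power:
  fixes m d :: real
  assumes "1 \<le> n" "1 \<le> m" "0 < d" "d \<le> m"
  shows "real n < d * (2 * m powr (1 - 1 / real (Suc n)) / d) ^ n"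
proof -
  define M where "M = m powr (1 - 1 / real (Suc n))"
  have "d ^ (n - 1) \<le> m ^ (n - 1)"
    using assms by (intro power_mono) auto
  also have "m ^ (n - 1) = m powr real (n - 1)"
    using assms by (simp only: powr_realpow)
  also have "\<dots> \<le> m powr (real n * (1 - 1 / real (Suc n)))"
    using assms by (intro powr_mono) (auto simp: field_simps of_nat_diff)
  also have "\<dots> = M ^ n"
    using assms by (simp add: M_def powr_power)
  finally have "d ^ (n - 1) \<le> M ^ n" .
  have "real n < 2 ^ n" by (metis less_exp of_nat_less_iff of_nat_numeral of_nat_power)
  also have "(2::real) ^ n \<le> 2 ^ n * M ^ n / d ^ (n - 1)"
    using \<open>d ^ (n - 1) \<le> M ^ n\<close> assms by (simp add: le_divide_eq)
  also have "\<dots> = d * (2 * M / d) ^ n"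
    using assms by (cases n) (simp_all add: power_divide power_mult_distrib)
  finally show ?thesis by (simp add: M_def)
qed

lemma sum_truncated_ge:
  fixes r :: "'b \<Rightarrow> nat"
  assumes "finite D" "1 \<le> n" "real (Suc n) * real (card D) < (\<Sum>b\<in>D. real (r b))"
  shows "2 * (\<Sum>b\<in>D. real (r b)) \<le> real (Suc n) * (\<Sum>b\<in>D. max 0 (real (r b) - real n + 1))"
proof -
  define R where "R = (\<Sum>b\<in>D. real (r b))"
  define d where "d = real (card D)"
  have "R - (real n - 1) * d \<le> (\<Sum>b\<in>D. max 0 (real (r b) - real n + 1))"
    using sum_mono[of D "\<lambda>b. real (r b) - real n + 1" "\<lambda>b. max 0 (real (r b) - real n + 1)"]
    by (simp add: R_def d_def sum_subtractf sum.distrib algebra_simps)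
  moreover have "real (Suc n) * (R - (real n - 1) * d) - 2 * R = (real n - 1) * (R - real (Suc n) * d)"
    by (simp add: algebra_simps)
  moreover have "0 \<le> (real n - 1) * (R - real (Suc n) * d)"
    using assms(2,3) by (simp add: R_def d_def)
  ultimately show ?thesis
    by (smt (verit) R_def mult_left_mono of_nat_0_le_iff)
qed

lemma card_mult_mean_power_le_sum_choose:
  fixes r :: "'b \<Rightarrow> nat" and D :: "'b set" and n :: nat
  defines "Z \<equiv> (\<Sum>b\<in>D. max 0 (real (r b) - real n + 1))"
  assumes "finite D" "0 < Z"
  shows "real (card D) * (Z / real (card D)) ^ n \<le> fact n * (\<Sum>b\<in>D. real (r b choose n))"
proof -
  have "real (card D) * (Z / real (card D)) ^ n \<le> (\<Sum>b\<in>D. max 0 (real (r b) - real n + 1) ^ n)"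
    using card_mult_power_mean_le[of D _ n] assms by simp
  also have "\<dots> \<le> fact n * (\<Sum>b\<in>D. real (r b choose n))"
    by (simp add: sum_distrib_left power_le_fact_mult_choose sum_mono)
  finally show ?thesis .
qed

lemma sum_le_if_sum_choose_le:
  fixes r :: "'b \<Rightarrow> nat" and m :: real
  assumes "finite D" "1 \<le> n" "1 \<le> m" "real (card D) \<le> m"
    and choose_sum: "(\<Sum>b\<in>D. real (r b choose n)) \<le> real n * real (p choose n)"
    and lower: "real p * (real (Suc n) * m powr (1 - 1 / real (Suc n))) \<le> (\<Sum>b\<in>D. real (r b))"
  shows "(\<Sum>b\<in>D. real (r b)) \<le> real (Suc n) * real (card D)"
proof (rule ccontr)
  define R where "R = (\<Sum>b\<in>D. real (r b))"
  define d where "d = real (card D)"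
  define M where "M = m powr (1 - 1 / real (Suc n))"
  define Z where "Z = (\<Sum>b\<in>D. max 0 (real (r b) - real n + 1))"
  assume "\<not> R \<le> real (Suc n) * d"
  then have R_gt: "real (Suc n) * d < R" by (simp add: R_def d_def)
  then have "2 * R \<le> real (Suc n) * Z"
    using sum_truncated_ge[OF assms(1,2)] by (simp add: R_def d_def Z_def)
  have "0 \<le> real (Suc n) * d" by (simp add: d_def)
  with R_gt have "0 < R" by linarith
  then have "0 < d" using assms(1) by (auto simp: R_def d_def card_gt_0_iff)
  from \<open>0 < R\<close> \<open>2 * R \<le> _\<close> have "0 < Z"
    by (smt (verit) of_nat_0_le_iff mult_nonneg_nonpos)
  have "real (Suc n) * (2 * real p * M) = 2 * (real p * (real (Suc n) * M))"
    by (simp only: ac_simps)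
  also have "\<dots> \<le> real (Suc n) * Z" using lower \<open>2 * R \<le> _\<close> unfolding R_def M_def by linarith
  finally have "2 * real p * M \<le> Z" by simp
  have "d * (Z / d) ^ n \<le> fact n * (\<Sum>b\<in>D. real (r b choose n))"
    using card_mult_mean_power_le_sum_choose[OF assms(1)] \<open>0 < Z\<close> by (simp add: Z_def d_def)
  also have "\<dots> \<le> real n * (fact n * real (p choose n))"
    using choose_sum by (simp add: mult.left_commute)
  also have "\<dots> \<le> real n * real p ^ n"
    by (intro mult_left_mono fact_mult_choose_le_power) auto
  finally have upper: "d * (Z / d) ^ n \<le> real n * real p ^ n" .
  have "0 < d * (Z / d) ^ n" using \<open>0 < d\<close> \<open>0 < Z\<close> by simp
  then have "0 < p" using upper assms(2) by (cases p) (auto simp: zero_power)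
  have "real p ^ n * real n < real p ^ n * (d * (2 * M / d) ^ n)"
    using exponent_lt_mean_power[of n m d] assms \<open>0 < d\<close> \<open>0 < p\<close> by (simp add: M_def d_def)
  also have "\<dots> = d * (2 * real p * M / d) ^ n"
    by (simp add: power_mult_distrib power_divide)
  also have "\<dots> \<le> d * (Z / d) ^ n"
    using \<open>2 * real p * M \<le> Z\<close> \<open>0 < d\<close> assms(3)
    by (intro mult_left_mono power_mono divide_right_mono) (auto simp: M_def)
  finally show False using upper by (simp add: mult.commute)
qed

definition heavy :: "('a \<times> 'a) set \<Rightarrow> real \<Rightarrow> 'a \<Rightarrow> 'a \<Rightarrow> bool" where
  "heavy E T u u' \<longleftrightarrow> u \<noteq> u' \<and> T < real (codegA E u u')"

definition conflict :: "('a \<times> 'a) set \<Rightarrow> real \<Rightarrow> 'a \<times> 'a \<Rightarrow> 'a \<times> 'a \<Rightarrow> bool" where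
  "conflict E T e e' \<longleftrightarrow> snd e = snd e' \<and> heavy E T (fst e) (fst e')"

lemma codegA_commute: "codegA E u u' = codegA E u' u"
  by (simp add: codegA_def conj_commute)

lemma conflict_sym: "conflict E T e e' \<Longrightarrow> conflict E T e' e"
  by (auto simp: conflict_def heavy_def codegA_commute)

lemma conflict_irrefl: "\<not> conflict E T e e"
  by (simp add: conflict_def heavy_def)

lemma codegA_mono: "finite E \<Longrightarrow> E' \<subseteq> E \<Longrightarrow> codegA E' u u' \<le> codegA E u u'"
  unfolding codegA_def
  by (rule card_mono, rule finite_subset[of _ "snd ` E"]) force+

lemma codegA_le_if_conflict_free:
  assumes "finite E" "I \<subseteq> E" "\<forall>e\<in>I. \<forall>e'\<in>I. \<not> conflict E T e e'" "u \<noteq> u'" "0 \<le> T"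
  shows "real (codegA I u u') \<le> T"
proof (cases "heavy E T u u'")
  case True
  then have "{b. (u, b) \<in> I \<and> (u', b) \<in> I} = {}"
    using assms(3) by (force simp: conflict_def)
  then have "codegA I u u' = 0" by (simp only: codegA_def card.empty)
  then show ?thesis using assms(5) by simp
next
  case False
  then have "real (codegA E u u') \<le> T" using assms(4) by (simp add: heavy_def)
  moreover have "real (codegA I u u') \<le> real (codegA E u u')"
    using codegA_mono[OF assms(1,2)] by simp
  ultimately show ?thesis by linarith
qed

lemma sum_card_filter_swap:
  "finite X \<Longrightarrow> finite Y \<Longrightarrow> (\<Sum>x\<in>X. card {y\<in>Y. R x y}) = (\<Sum>y\<in>Y. card {x\<in>X. R x y})"
  unfolding card_eq_sum by (rule sum.swap_restrict)

lemma card_common_neighbours_le: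
  assumes "bipartite_graph A B E" "\<not> contains_Kkk A B E (Suc n)" "S \<subseteq> A" "card S = Suc n"
  shows "card {b. \<forall>u\<in>S. (u, b) \<in> E} \<le> n"
proof (rule ccontr)
  obtain u where "u \<in> S" using assms(4) by fastforce
  then have common_B: "{b. \<forall>u\<in>S. (u, b) \<in> E} \<subseteq> B"
    using assms(1) by (auto simp: bipartite_graph_def)
  assume "\<not> card {b. \<forall>u\<in>S. (u, b) \<in> E} \<le> n"
  then obtain T where T: "T \<subseteq> {b. \<forall>u\<in>S. (u, b) \<in> E}" "card T = Suc n"
    using obtain_subset_with_card_n[of "Suc n" "{b. \<forall>u\<in>S. (u, b) \<in> E}"] by force
  moreover have "S \<times> T \<subseteq> E" using T(1) by blast
  ultimately have "contains_Kkk A B E (Suc n)"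
    using common_B assms(3,4) unfolding contains_Kkk_def by (intro exI[of _ S] exI[of _ T]) auto
  with assms(2) show False ..
qed

lemma sum_choose_common_neighbours_le:
  assumes bip: "bipartite_graph A B E" and no_K: "\<not> contains_Kkk A B E (Suc n)"
    and "u \<in> A" "P \<subseteq> A - {u}"
  shows "(\<Sum>b\<in>{b. (u, b) \<in> E}. card {u'\<in>P. (u', b) \<in> E} choose n) \<le> n * (card P choose n)"
proof -
  define N where "N = {b. (u, b) \<in> E}"
  define Qs where "Qs = {Q. Q \<subseteq> P \<and> card Q = n}"
  have "finite P" "finite N"
    using bip assms(4) by (auto simp: bipartite_graph_def N_def intro: finite_subset)
  then have "finite Qs" by (simp add: Qs_def)
  have "(\<Sum>b\<in>N. card {u'\<in>P. (u', b) \<in> E} choose n) = (\<Sum>b\<in>N. card {Q\<in>Qs. Q \<subseteq> {u'\<in>P. (u', b) \<in> E}})"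
  proof (intro sum.cong refl)
    fix b
    have "{Q\<in>Qs. Q \<subseteq> {u'\<in>P. (u', b) \<in> E}} = {Q. Q \<subseteq> {u'\<in>P. (u', b) \<in> E} \<and> card Q = n}"
      by (auto simp: Qs_def)
    then show "card {u'\<in>P. (u', b) \<in> E} choose n = card {Q\<in>Qs. Q \<subseteq> {u'\<in>P. (u', b) \<in> E}}"
      using \<open>finite P\<close> by (simp add: n_subsets)
  qed
  also have "\<dots> = (\<Sum>Q\<in>Qs. card {b\<in>N. Q \<subseteq> {u'\<in>P. (u', b) \<in> E}})"
    using \<open>finite N\<close> \<open>finite Qs\<close> by (rule sum_card_filter_swap)
  also have "\<dots> \<le> (\<Sum>Q\<in>Qs. n)"
  proof (rule sum_mono)
    fix Q assume "Q \<in> Qs"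
    then have "Q \<subseteq> A - {u}" "finite Q" "card Q = n"
      using assms(4) \<open>finite P\<close> by (auto simp: Qs_def intro: finite_subset)
    then have "insert u Q \<subseteq> A" "card (insert u Q) = Suc n"
      using assms(3) by (auto simp: subset_Diff_insert)
    then have "card {b. \<forall>v\<in>insert u Q. (v, b) \<in> E} \<le> n"
      by (rule card_common_neighbours_le[OF bip no_K])
    moreover have "{b\<in>N. Q \<subseteq> {u'\<in>P. (u', b) \<in> E}} = {b. \<forall>v\<in>insert u Q. (v, b) \<in> E}"
      using \<open>Q \<in> Qs\<close> by (auto simp: N_def Qs_def)
    ultimately show "card {b\<in>N. Q \<subseteq> {u'\<in>P. (u', b) \<in> E}} \<le> n" by simp
  qed
  also have "\<dots> = n * (card P choose n)"
    using \<open>finite P\<close> by (simp add: Qs_def n_subsets)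
  finally show ?thesis by (simp add: N_def)
qed

lemma sum_card_common_neighbours_eq_sum_codegA:
  assumes "finite P" "finite {b. (u, b) \<in> E}"
  shows "(\<Sum>b\<in>{b. (u, b) \<in> E}. card {u'\<in>P. (u', b) \<in> E}) = (\<Sum>u'\<in>P. codegA E u u')"
  using sum_card_filter_swap[OF assms(2,1), of "\<lambda>b u'. (u', b) \<in> E"]
  by (simp add: codegA_def conj_commute)

lemma sum_heavy_partners_le:
  fixes k :: nat and m :: real
  assumes bip: "bipartite_graph A B E" and no_K: "\<not> contains_Kkk A B E k"
    and "2 \<le> k" "1 \<le> m" "u \<in> A" "real (degA E u) \<le> m"
  defines "T \<equiv> real k * m powr (1 - 1 / real k)"
  shows "(\<Sum>b\<in>{b. (u, b) \<in> E}. real (card {u'\<in>A. heavy E T u u' \<and> (u', b) \<in> E}))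
           \<le> real k * real (degA E u)"
proof -
  define n where "n = k - 1"
  have k: "k = Suc n" and "1 \<le> n" using \<open>2 \<le> k\<close> by (auto simp: n_def)
  define P where "P = {u'\<in>A. heavy E T u u'}"
  define r where "r b = card {u'\<in>P. (u', b) \<in> E}" for b
  have "finite A" "finite {b. (u, b) \<in> E}"
    using bip by (auto simp: bipartite_graph_def intro: finite_subset[of _ B])
  then have "finite P" by (simp add: P_def)
  have "P \<subseteq> A - {u}" by (auto simp: P_def heavy_def)
  then have "(\<Sum>b\<in>{b. (u, b) \<in> E}. r b choose n) \<le> n * (card P choose n)"
    unfolding r_def by (rule sum_choose_common_neighbours_le[OF bip no_K[unfolded k] \<open>u \<in> A\<close>])
  then have "(\<Sum>b\<in>{b. (u, b) \<in> E}. real (r b choose n)) \<le> real n * real (card P choose n)"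
    by (metis of_nat_mono of_nat_mult of_nat_sum)
  moreover have "real (card P) * T \<le> (\<Sum>b\<in>{b. (u, b) \<in> E}. real (r b))"
  proof -
    have "real (card P) * T = (\<Sum>u'\<in>P. T)" by simp
    also have "\<dots> \<le> (\<Sum>u'\<in>P. real (codegA E u u'))"
      by (rule sum_mono) (simp add: P_def heavy_def less_imp_le)
    also have "\<dots> = (\<Sum>b\<in>{b. (u, b) \<in> E}. real (r b))"
      using sum_card_common_neighbours_eq_sum_codegA[OF \<open>finite P\<close> \<open>finite {b. _}\<close>]
      unfolding r_def by (simp flip: of_nat_sum)
    finally show ?thesis .
  qed
  ultimately have "(\<Sum>b\<in>{b. (u, b) \<in> E}. real (r b)) \<le> real k * real (card {b. (u, b) \<in> E})"
    using sum_le_if_sum_choose_le[of "{b. (u, b) \<in> E}" n m r "card P"] assms(4,6) \<open>1 \<le> n\<close>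
      \<open>finite {b. _}\<close>
    by (simp add: k T_def degA_def)
  then show ?thesis by (simp add: r_def P_def degA_def)
qed

lemma sum_card_conflicts_le:
  fixes k :: nat and m :: real
  assumes bip: "bipartite_graph A B E" and no_K: "\<not> contains_Kkk A B E k"
    and "2 \<le> k" "1 \<le> m" "\<forall>u\<in>A. real (degA E u) \<le> m"
  defines "T \<equiv> real k * m powr (1 - 1 / real k)"
  shows "(\<Sum>e\<in>E. real (card {e'\<in>E. conflict E T e e'})) \<le> real k * real (card E)"
proof -
  define N where "N u = {b. (u, b) \<in> E}" for u
  have "finite A" "\<And>u. finite (N u)" "E \<subseteq> A \<times> B"
    using bip by (auto simp: bipartite_graph_def N_def intro: finite_subset[of _ B])
  then have E: "E = Sigma A N" by (auto simp: N_def)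
  have conflicts: "card {e'\<in>E. conflict E T (u, b) e'} = card {u'\<in>A. heavy E T u u' \<and> (u', b) \<in> E}"
    for u b
  proof -
    have "{e'\<in>E. conflict E T (u, b) e'} = (\<lambda>u'. (u', b)) ` {u'\<in>A. heavy E T u u' \<and> (u', b) \<in> E}"
      using \<open>E \<subseteq> A \<times> B\<close> by (auto simp: conflict_def)
    then show ?thesis by (simp add: card_image inj_on_def)
  qed
  have "(\<Sum>e\<in>E. real (card {e'\<in>E. conflict E T e e'}))
        = (\<Sum>e\<in>Sigma A N. real (card {e'\<in>E. conflict E T e e'}))"
    by (rule sum.cong[OF E refl])
  also have "\<dots> = (\<Sum>u\<in>A. \<Sum>b\<in>N u. real (card {u'\<in>A. heavy E T u u' \<and> (u', b) \<in> E}))"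
    unfolding conflicts[symmetric] using \<open>finite A\<close> \<open>\<And>u. finite (N u)\<close>
    by (subst sum.Sigma) (auto simp: case_prod_beta')
  also have "\<dots> \<le> (\<Sum>u\<in>A. real k * real (degA E u))"
    using assms(3-5) unfolding T_def N_def by (intro sum_mono sum_heavy_partners_le[OF bip no_K]) auto
  also have "\<dots> = real k * real (card (Sigma A N))"
    using \<open>finite A\<close> \<open>\<And>u. finite (N u)\<close> by (simp add: degA_def N_def sum_distrib_left)
  also have "\<dots> = real k * real (card E)" using E by simp
  finally show ?thesis .
qed

lemma contains_Kkk_1: "bipartite_graph A B E \<Longrightarrow> (u, b) \<in> E \<Longrightarrow> contains_Kkk A B E 1"
  unfolding contains_Kkk_def bipartite_graph_def by (intro exI[of _ "{u}"] exI[of _ "{b}"]) auto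

lemma degA_gt_0:
  assumes "finite E" "(u, b) \<in> E"
  shows "0 < degA E u"
proof -
  have "{b. (u, b) \<in> E} \<subseteq> snd ` E" by force
  then have "finite {b. (u, b) \<in> E}" using assms(1) by (rule finite_subset[OF _ finite_imageI])
  then show ?thesis using assms(2) by (auto simp: degA_def card_gt_0_iff)
qed

theorem lemma3p2:
  fixes A B :: "'a set" and E :: "('a \<times> 'a) set" and k :: nat and m :: real
  assumes "k > 0" and "m > 0"
    and "bipartite_graph A B E"
    and "\<not> contains_Kkk A B E k"
    and "\<forall>u\<in>A. real (degA E u) \<le> m"
  shows "\<exists>E'. E' \<subseteq> E \<and> real (card E') \<ge> real (card E) / real (k + 1) \<and>
           (\<forall>u\<in>A. \<forall>u'\<in>A. u \<noteq> u' \<longrightarrow>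
              real (codegA E' u u') \<le> real k * m powr (1 - 1 / real k))"
proof (cases "E = {}")
  case True
  then show ?thesis by (intro exI[of _ "{}"]) (simp add: codegA_def)
next
  case False
  have "finite E"
    using assms(3) finite_subset[of E "A \<times> B"] by (simp add: bipartite_graph_def)
  obtain u b where "(u, b) \<in> E" using False by auto
  then have "k \<noteq> 1" using assms(4) contains_Kkk_1[OF assms(3)] by auto
  then have "2 \<le> k" using assms(1) by linarith
  have "u \<in> A" using assms(3) \<open>(u, b) \<in> E\<close> by (auto simp: bipartite_graph_def)
  have "1 \<le> real (degA E u)" using degA_gt_0[OF \<open>finite E\<close> \<open>(u, b) \<in> E\<close>] by simp
  then have "1 \<le> m" using assms(5) \<open>u \<in> A\<close> by fastforce
  define T where "T = real k * m powr (1 - 1 / real k)"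
  obtain I where I: "I \<subseteq> E" "\<forall>e\<in>I. \<forall>e'\<in>I. \<not> conflict E T e e'"
    "(\<Sum>e\<in>E. 1 / (real (card {e'\<in>E. conflict E T e e'}) + 1)) \<le> real (card I)"
    using caro_wei[of "conflict E T" E, OF conflict_sym conflict_irrefl \<open>finite E\<close>] by blast
  have conflicts: "(\<Sum>e\<in>E. real (card {e'\<in>E. conflict E T e e'})) \<le> real k * real (card E)"
    unfolding T_def using sum_card_conflicts_le[OF assms(3,4) \<open>2 \<le> k\<close> \<open>1 \<le> m\<close> assms(5)] .
  have "real (card E) / real (k + 1) \<le> real (card I)"
    using card_div_le_sum_inverse[OF \<open>finite E\<close> _ _ conflicts] I(3) by (simp add: add.commute)
  moreover have "real (codegA I u u') \<le> T" if "u \<noteq> u'" for u u'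
    using codegA_le_if_conflict_free[OF \<open>finite E\<close> I(1,2) that] assms(2) by (simp add: T_def)
  ultimately show ?thesis using I(1) by (auto simp: T_def)
qed

end
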